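(* Let $G=(V,E)$ be an undirected graph with positive edge weights, and let $p,v\in V$ be distinct. If a minimum $p,v$-cut $S$ with $v\in S$ (and $p\notin S$) satisfies $|E(\{p\},S)|>0.6\deg(p)$, then for all $v'\in (V\setminus S)\setminus\{p\}$ we have $\lambda_{p,v'}\le 0.8\,\lambda_{p,v}$.
   Context: $|E(A,B)|$ is the total weight of edges between node sets $A$ and $B$; $\deg(u)$ is the total weight of edges incident to $u$; $\lambda_{x,y}$ denotes the value (total weight of crossing edges) of a minimum $x,y$-cut in $G$. *)

theory Defs
  imports Complex_Main
begin

text \<open>A weighted undirected graph on a finite vertex set V is given by a weight
function w with w x y = w y x, no loops, and w x y \<ge> 0; the edges are the
pairs with w x y > 0 (positive weights), non-edges have weight 0.\<close>

definition wgraph :: "'a set \<Rightarrow> ('a \<Rightarrow> 'a \<Rightarrow> real) \<Rightarrow> bool" where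
  "wgraph V w \<longleftrightarrow> finite V \<and> (\<forall>x y. w x y = w y x) \<and> (\<forall>x. w x x = 0)
     \<and> (\<forall>x y. w x y \<ge> 0) \<and> (\<forall>x y. w x y \<noteq> 0 \<longrightarrow> x \<in> V \<and> y \<in> V)"

definition cut_weight :: "('a \<Rightarrow> 'a \<Rightarrow> real) \<Rightarrow> 'a set \<Rightarrow> 'a set \<Rightarrow> real" where
  "cut_weight w A B = (\<Sum>a\<in>A. \<Sum>b\<in>B. w a b)"

definition wdeg :: "'a set \<Rightarrow> ('a \<Rightarrow> 'a \<Rightarrow> real) \<Rightarrow> 'a \<Rightarrow> real" where
  "wdeg V w u = (\<Sum>x\<in>V. w u x)"

definition is_cut :: "'a set \<Rightarrow> 'a \<Rightarrow> 'a \<Rightarrow> 'a set \<Rightarrow> bool" where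
  "is_cut V x y S \<longleftrightarrow> S \<subseteq> V \<and> y \<in> S \<and> x \<notin> S"

definition cut_value :: "'a set \<Rightarrow> ('a \<Rightarrow> 'a \<Rightarrow> real) \<Rightarrow> 'a set \<Rightarrow> real" where
  "cut_value V w S = cut_weight w S (V - S)"

definition min_cut_val :: "'a set \<Rightarrow> ('a \<Rightarrow> 'a \<Rightarrow> real) \<Rightarrow> 'a \<Rightarrow> 'a \<Rightarrow> real" where
  "min_cut_val V w x y = Min (cut_value V w ` {S. is_cut V x y S})"

definition is_min_cut :: "'a set \<Rightarrow> ('a \<Rightarrow> 'a \<Rightarrow> real) \<Rightarrow> 'a \<Rightarrow> 'a \<Rightarrow> 'a set \<Rightarrow> bool" where
  "is_min_cut V w x y S \<longleftrightarrow> is_cut V x y S \<and>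
     (\<forall>T. is_cut V x y T \<longrightarrow> cut_value V w S \<le> cut_value V w T)"

end

theory Submission
  imports Defs
begin

text \<open>Split V into p, the sink side S of a minimum p,v-cut and the rest T, and write
  a = |E(p,S)|, b = |E(p,T)|, c = |E(S,T)|. Then \<lambda>_{p,v} = a + c and deg p = a + b; since
  V - {p} is also a p,v-cut, minimality gives c \<le> b. For v' \<in> T the set T is a p,v'-cut
  of value b + c, and the hypothesis a > 0.6 (a + b) means b < 2a/3, so
  b + c \<le> 0.8 (a + c) follows from c \<le> b by linear arithmetic.\<close>

lemma finite_cut_values:
  assumes "finite V"
  shows "finite (cut_value V w ` {S. is_cut V x y S})"
  using assms by (auto simp: is_cut_def intro!: finite_imageI rev_finite_subset[of "Pow V"])

lemma min_cut_val_le_cut_value: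
  assumes "finite V" "is_cut V x y T"
  shows "min_cut_val V w x y \<le> cut_value V w T"
  unfolding min_cut_val_def using assms finite_cut_values by (intro Min_le) auto

lemma min_cut_val_eq_cut_value:
  assumes "finite V" "is_min_cut V w x y S"
  shows "min_cut_val V w x y = cut_value V w S"
  unfolding min_cut_val_def using assms finite_cut_values
  by (intro Min_eqI) (auto simp: is_min_cut_def)

lemma cut_weight_commute:
  assumes "\<And>x y. w x y = w y x"
  shows "cut_weight w A B = cut_weight w B A"
  unfolding cut_weight_def by (subst sum.swap) (simp add: assms)

lemma cut_weight_Un_right:
  assumes "finite B" "finite C" "B \<inter> C = {}"
  shows "cut_weight w A (B \<union> C) = cut_weight w A B + cut_weight w A C"
  unfolding cut_weight_def using assms by (simp add: sum.union_disjoint sum.distrib)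

lemma cut_weight_insert_right:
  assumes "finite B" "b \<notin> B"
  shows "cut_weight w A (insert b B) = cut_weight w A {b} + cut_weight w A B"
  using cut_weight_Un_right[of "{b}" B] assms by simp

lemma cut_weight_singleton_self:
  assumes "wgraph V w"
  shows "cut_weight w {p} {p} = 0"
  using assms by (simp add: cut_weight_def wgraph_def)

lemma wdeg_eq_cut_weight: "wdeg V w u = cut_weight w {u} V"
  by (simp add: wdeg_def cut_weight_def)

lemma cut_values_three_parts:
  assumes "wgraph V w" "p \<in> V" "S \<subseteq> V" "p \<notin> S"
  defines "T \<equiv> V - S - {p}"
  shows "cut_value V w S = cut_weight w {p} S + cut_weight w S T"
    and "cut_value V w T = cut_weight w {p} T + cut_weight w S T"
    and "wdeg V w p = cut_weight w {p} S + cut_weight w {p} T"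
proof -
  have fin: "finite S" "finite T" and sym: "\<And>x y. w x y = w y x"
    using assms(1,3) finite_subset by (auto simp: wgraph_def T_def)
  have VS: "V - S = insert p T" and VT: "V - T = insert p S" and V: "V = insert p (S \<union> T)"
    using assms(2-4) by (auto simp: T_def)
  have "p \<notin> T" "S \<inter> T = {}" by (auto simp: T_def)
  note split = cut_weight_insert_right cut_weight_Un_right
  show "cut_value V w S = cut_weight w {p} S + cut_weight w S T"
    unfolding cut_value_def VS using fin \<open>p \<notin> T\<close>
    by (simp add: split cut_weight_commute[of w S "{p}", OF sym])
  show "cut_value V w T = cut_weight w {p} T + cut_weight w S T"
    unfolding cut_value_def VT using fin assms(4)
    by (simp add: split cut_weight_commute[of w T "{p}", OF sym]
        cut_weight_commute[of w T S, OF sym])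
  show "wdeg V w p = cut_weight w {p} S + cut_weight w {p} T"
    unfolding wdeg_eq_cut_weight V using fin assms(4) \<open>p \<notin> T\<close> \<open>S \<inter> T = {}\<close>
    by (simp add: split cut_weight_singleton_self[OF assms(1)])
qed

lemma cut_value_remove_vertex:
  assumes "wgraph V w" "p \<in> V"
  shows "cut_value V w (V - {p}) = wdeg V w p"
proof -
  have sym: "\<And>x y. w x y = w y x" and "finite V"
    using assms(1) by (auto simp: wgraph_def)
  have "V - (V - {p}) = {p}" using assms(2) by auto
  then have "cut_value V w (V - {p}) = cut_weight w {p} (V - {p})"
    by (simp add: cut_value_def cut_weight_commute[OF sym])
  also have "\<dots> = cut_weight w {p} (insert p (V - {p}))"
    using \<open>finite V\<close>
    by (subst cut_weight_insert_right) (simp_all add: cut_weight_singleton_self[OF assms(1)])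
  also have "\<dots> = cut_weight w {p} V"
    by (simp only: insert_Diff[OF assms(2)])
  finally show ?thesis by (simp add: wdeg_eq_cut_weight)
qed

lemma min_cut_le_wdeg:
  assumes "wgraph V w" "p \<in> V" "v \<in> V" "p \<noteq> v" "is_min_cut V w p v S"
  shows "cut_value V w S \<le> wdeg V w p"
proof -
  have "is_cut V p v (V - {p})" using assms(3,4) by (auto simp: is_cut_def)
  then show ?thesis
    using assms(5) cut_value_remove_vertex[OF assms(1,2)] by (auto simp: is_min_cut_def)
qed

theorem lemma4p5:
  fixes V :: "'a set" and w :: "'a \<Rightarrow> 'a \<Rightarrow> real" and p v :: 'a and S :: "'a set"
  assumes "wgraph V w"
    and "p \<in> V" and "v \<in> V" and "p \<noteq> v"
    and "is_min_cut V w p v S"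
    and "cut_weight w {p} S > 0.6 * wdeg V w p"
  shows "\<forall>v' \<in> (V - S) - {p}. min_cut_val V w p v' \<le> 0.8 * min_cut_val V w p v"
proof
  fix v' assume v': "v' \<in> (V - S) - {p}"
  define T where "T = V - S - {p}"
  have finV: "finite V" using assms(1) by (simp add: wgraph_def)
  have "S \<subseteq> V" "p \<notin> S" using assms(5) by (auto simp: is_min_cut_def is_cut_def)
  note parts = cut_values_three_parts[OF assms(1,2) this, folded T_def]
  have "min_cut_val V w p v' \<le> cut_value V w T"
    using v' by (intro min_cut_val_le_cut_value[OF finV]) (auto simp: is_cut_def T_def)
  moreover have "min_cut_val V w p v = cut_value V w S"
    using min_cut_val_eq_cut_value[OF finV assms(5)] .
  moreover have "cut_value V w S \<le> wdeg V w p"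
    using min_cut_le_wdeg[OF assms(1-5)] .
  ultimately show "min_cut_val V w p v' \<le> 0.8 * min_cut_val V w p v"
    using assms(6) parts by simp
qed

end
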